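(* Let $V$ be an $n$-dimensional complex vector space with basis $e_1,\ldots,e_n$ and dual basis $e_1^*,\ldots,e_n^*$. Let $a_{ij}=e_i\otimes e_j-e_j\otimes e_i\in\Lambda_2(V)$ and $b_{ij}=e_i^*\otimes e_j^*+e_j^*\otimes e_i^*\in S_2(V^* )$, and let $A=(a_{ij})_{1\le i,j\le n}$, $B=(b_{ij})_{1\le i,j\le n}\in\operatorname{Mat}_{n,n}(\Lambda(\Lambda_2(V)\oplus S_2(V^* )))$. Then $\operatorname{tr}((AB)^k)=0$ for every $k>0$.
   Context: $\Lambda(\Lambda_2(V)\oplus S_2(V^* ))$ is the exterior algebra on $\Lambda_2(V)\oplus S_2(V^* )$; the $a_{ij}$ and $b_{ij}$ are elements of degree one in it (so they pairwise anticommute), with $a_{ji}=-a_{ij}$ and $b_{ji}=b_{ij}$. Matrix products are taken with entries multiplied in the order written. *)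

theory Defs
  imports Complex_Main "HOL-Library.Product_Lexorder"
begin

text \<open>Exterior algebra over the complex numbers on a vector space with a basis indexed
by a linearly ordered type 'g.  An element is given by its coordinates with respect to
the basis of wedge monomials g_1 ^ ... ^ g_r (g_1 < ... < g_r), indexed by finite sets
of generators.  Values at infinite sets are irrelevant (the product sets them to 0).\<close>

type_synonym 'g ext = "'g set \<Rightarrow> complex"

definition ext_sign :: "'g::linorder set \<Rightarrow> 'g set \<Rightarrow> complex" where
  "ext_sign T U = (-1) ^ card {(t, u). t \<in> T \<and> u \<in> U \<and> u < t}"

definition ext_zero :: "'g ext" where
  "ext_zero = (\<lambda>S. 0)"

definition ext_one :: "'g ext" where
  "ext_one = (\<lambda>S. if S = {} then 1 else 0)"

definition ext_add :: "'g ext \<Rightarrow> 'g ext \<Rightarrow> 'g ext" where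
  "ext_add x y = (\<lambda>S. x S + y S)"

definition ext_smult :: "complex \<Rightarrow> 'g ext \<Rightarrow> 'g ext" where
  "ext_smult c x = (\<lambda>S. c * x S)"

definition ext_mult :: "'g::linorder ext \<Rightarrow> 'g ext \<Rightarrow> 'g ext" where
  "ext_mult x y = (\<lambda>S. if finite S then
      (\<Sum>T\<in>Pow S. ext_sign T (S - T) * x T * y (S - T)) else 0)"

definition ext_gen :: "'g \<Rightarrow> 'g ext" where
  "ext_gen g = (\<lambda>S. if S = {g} then 1 else 0)"

text \<open>Basis of \<Lambda>_2(V) \<oplus> S_2(V^*):  (i,j,False) for i<j stands for
  e_i\<otimes>e_j - e_j\<otimes>e_i;  (i,j,True) for i<j stands for e_i^*\<otimes>e_j^* + e_j^*\<otimes>e_i^*,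
  and (i,i,True) stands for e_i^*\<otimes>e_i^*.  Indices are 0-based (i < n).\<close>
type_synonym gen = "nat \<times> nat \<times> bool"

definition a_elt :: "nat \<Rightarrow> nat \<Rightarrow> gen ext" where
  "a_elt i j = (if i < j then ext_gen (i, j, False)
                else if j < i then ext_smult (-1) (ext_gen (j, i, False))
                else ext_zero)"

definition b_elt :: "nat \<Rightarrow> nat \<Rightarrow> gen ext" where
  "b_elt i j = (if i = j then ext_smult 2 (ext_gen (i, i, True))
                else ext_gen (min i j, max i j, True))"

definition mat_mult :: "nat \<Rightarrow> (nat \<Rightarrow> nat \<Rightarrow> 'g::linorder ext) \<Rightarrow> (nat \<Rightarrow> nat \<Rightarrow> 'g ext)
    \<Rightarrow> nat \<Rightarrow> nat \<Rightarrow> 'g ext" where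
  "mat_mult n M N = (\<lambda>i j. foldr ext_add (map (\<lambda>l. ext_mult (M i l) (N l j)) [0..<n]) ext_zero)"

definition mat_id :: "nat \<Rightarrow> nat \<Rightarrow> 'g ext" where
  "mat_id = (\<lambda>i j. if i = j then ext_one else ext_zero)"

fun mat_pow :: "nat \<Rightarrow> (nat \<Rightarrow> nat \<Rightarrow> 'g::linorder ext) \<Rightarrow> nat \<Rightarrow> nat \<Rightarrow> nat \<Rightarrow> 'g ext" where
  "mat_pow n M 0 = mat_id"
| "mat_pow n M (Suc k) = mat_mult n (mat_pow n M k) M"

definition mat_trace :: "nat \<Rightarrow> (nat \<Rightarrow> nat \<Rightarrow> 'g ext) \<Rightarrow> 'g ext" where
  "mat_trace n M = foldr ext_add (map (\<lambda>i. M i i) [0..<n]) ext_zero"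

end

theory Submission
  imports Defs
begin

text \<open>The entries of \<open>A\<close> and \<open>B\<close> are odd, so they anticommute and all entries of
  \<open>C = AB\<close> and \<open>D = BA\<close> are even, hence commute with all homogeneous elements.
  Transposing, \<open>C\<^sup>T = BA = D\<close> (antisymmetry of \<open>A\<close>, symmetry of \<open>B\<close> and one
  anticommutation), so \<open>tr C\<^sup>k = tr D\<^sup>k\<close>.  On the other hand
  \<open>C\<^sup>k = A (B C\<^sup>k\<^sup>-\<^sup>1)\<close> is a product of two odd matrices, and cycling the odd factor \<open>A\<close>
  to the end of the trace costs a sign: \<open>tr C\<^sup>k = - tr (B C\<^sup>k\<^sup>-\<^sup>1 A) = - tr D\<^sup>k\<close>.
  Thus \<open>tr C\<^sup>k = - tr C\<^sup>k\<close>, which vanishes in characteristic zero.\<close>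

definition inversions :: "'g::linorder set \<Rightarrow> 'g set \<Rightarrow> nat" where
  "inversions T U = card {(t, u). t \<in> T \<and> u \<in> U \<and> u < t}"

lemma ext_sign_inversions: "ext_sign T U = (-1) ^ inversions T U"
  by (simp add: ext_sign_def inversions_def)

lemma finite_inversion_pairs:
  "finite A \<Longrightarrow> finite C \<Longrightarrow> finite {(t, u). t \<in> A \<and> u \<in> C \<and> u < t}"
  by (rule finite_subset[where B = "A \<times> C"]) auto

lemma inversions_Un_left:
  assumes "finite A" "finite B" "finite C" "A \<inter> B = {}"
  shows "inversions (A \<union> B) C = inversions A C + inversions B C"
proof -
  have "{(t, u). t \<in> A \<union> B \<and> u \<in> C \<and> u < t}
      = {(t, u). t \<in> A \<and> u \<in> C \<and> u < t} \<union> {(t, u). t \<in> B \<and> u \<in> C \<and> u < t}" by auto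
  then show ?thesis
    unfolding inversions_def using assms
    by (simp add: card_Un_disjoint finite_inversion_pairs disjoint_iff)
qed

lemma inversions_Un_right:
  assumes "finite A" "finite B" "finite C" "B \<inter> C = {}"
  shows "inversions A (B \<union> C) = inversions A B + inversions A C"
proof -
  have "{(t, u). t \<in> A \<and> u \<in> B \<union> C \<and> u < t}
      = {(t, u). t \<in> A \<and> u \<in> B \<and> u < t} \<union> {(t, u). t \<in> A \<and> u \<in> C \<and> u < t}" by auto
  then show ?thesis
    unfolding inversions_def using assms
    by (simp add: card_Un_disjoint finite_inversion_pairs disjoint_iff)
qed

lemma inversions_swap:
  assumes "finite A" "finite B" "A \<inter> B = {}"
  shows "inversions A B + inversions B A = card A * card B"
proof -
  let ?P = "{(t, u). t \<in> A \<and> u \<in> B \<and> u < t}"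
  let ?Q = "prod.swap ` {(t, u). t \<in> B \<and> u \<in> A \<and> u < t}"
  have split: "A \<times> B = ?P \<union> ?Q"
    using assms(3) by (auto simp: image_iff)
  have "card ?Q = inversions B A"
    unfolding inversions_def by (rule card_image) (simp add: inj_on_def)
  moreover have "finite ?P" "finite ?Q" "?P \<inter> ?Q = {}"
    using assms by (auto simp: finite_inversion_pairs)
  ultimately have "card (A \<times> B) = inversions A B + inversions B A"
    unfolding split by (simp add: card_Un_disjoint inversions_def)
  then show ?thesis by (simp add: card_cartesian_product)
qed

lemma ext_sign_swap:
  assumes "finite A" "finite B" "A \<inter> B = {}"
  shows "ext_sign A B = (-1) ^ (card A * card B) * ext_sign B A"
proof -
  have "(-1::complex) ^ inversions B A * (-1) ^ inversions B A = 1"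
    by (simp flip: power_mult_distrib)
  then show ?thesis
    by (simp add: ext_sign_inversions power_add mult.assoc flip: inversions_swap[OF assms])
qed

lemma ext_sign_cocycle:
  assumes "finite U" "finite V" "finite W" "U \<inter> V = {}" "U \<inter> W = {}" "V \<inter> W = {}"
  shows "ext_sign (U \<union> V) W * ext_sign U V = ext_sign U (V \<union> W) * ext_sign V W"
  using assms by (simp add: ext_sign_inversions inversions_Un_left inversions_Un_right
      add.commute add.left_commute flip: power_add)

lemma ext_mult_finite:
  "finite S \<Longrightarrow> ext_mult x y S = (\<Sum>T\<in>Pow S. ext_sign T (S - T) * x T * y (S - T))"
  by (simp add: ext_mult_def)

lemma ext_mult_assoc: "ext_mult (ext_mult x y) z = ext_mult x (ext_mult y z)"
proof
  fix S :: "'a set"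
  show "ext_mult (ext_mult x y) z S = ext_mult x (ext_mult y z) S"
  proof (cases "finite S")
    case fin: True
    let ?f = "\<lambda>U V. ext_sign U (S - U) * ext_sign V (S - U - V) * x U * y V * z (S - U - V)"
    have "ext_mult (ext_mult x y) z S = (\<Sum>(T, U)\<in>(SIGMA T:Pow S. Pow T).
        ext_sign T (S - T) * ext_sign U (T - U) * x U * y (T - U) * z (S - T))"
      unfolding ext_mult_finite[OF fin]
      by (subst sum.Sigma[symmetric]) (auto simp: fin finite_subset[OF _ fin] ext_mult_finite
          sum_distrib_left sum_distrib_right mult.assoc intro!: sum.cong)
    \<comment> \<open>reindex the splittings \<open>S = (U \<union> V) \<union> W\<close> as \<open>S = U \<union> (V \<union> W)\<close>\<close>
    also have "\<dots> = (\<Sum>(U, V)\<in>(SIGMA U:Pow S. Pow (S - U)). ?f U V)"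
    proof (rule sum.reindex_bij_witness[symmetric, where j = "\<lambda>(U, V). (U \<union> V, U)"
          and i = "\<lambda>(T, U). (U, T - U)"])
      fix a assume "a \<in> (SIGMA U:Pow S. Pow (S - U))"
      then obtain U V where a: "a = (U, V)" "U \<subseteq> S" "V \<subseteq> S - U" by auto
      then have "finite U" "finite V" "finite (S - U - V)"
        using fin by (auto intro: finite_subset)
      moreover have "V \<union> (S - U - V) = S - U" using a by auto
      ultimately have "ext_sign (U \<union> V) (S - U - V) * ext_sign U V = ext_sign U (S - U) * ext_sign V (S - U - V)"
        using ext_sign_cocycle[of U V "S - U - V"] a by auto
      moreover have "S - (U \<union> V) = S - U - V" "U \<union> V - U = V" using a by auto
      ultimately show "(case (case a of (U, V) \<Rightarrow> (U \<union> V, U)) of (T, U) \<Rightarrow>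
            ext_sign T (S - T) * ext_sign U (T - U) * x U * y (T - U) * z (S - T)) =
          (case a of (U, V) \<Rightarrow> ?f U V)"
        unfolding a by (simp add: mult_ac)
    qed auto
    also have "\<dots> = ext_mult x (ext_mult y z) S"
      unfolding ext_mult_finite[OF fin]
      by (subst sum.Sigma[symmetric]) (auto simp: fin ext_mult_finite sum_distrib_left
          mult_ac Diff_Diff_Int intro!: sum.cong)
    finally show ?thesis .
  qed (simp add: ext_mult_def)
qed

lemma ext_mult_add_right: "ext_mult x (\<lambda>S. y S + z S) = (\<lambda>S. ext_mult x y S + ext_mult x z S)"
  by (auto simp: ext_mult_def ring_distribs sum.distrib)

lemma ext_mult_add_left: "ext_mult (\<lambda>S. x S + y S) z = (\<lambda>S. ext_mult x z S + ext_mult y z S)"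
  by (auto simp: ext_mult_def ring_distribs sum.distrib)

lemma ext_mult_one_left:
  assumes "\<forall>S. infinite S \<longrightarrow> x S = 0"
  shows "ext_mult ext_one x = x"
proof
  fix S
  show "ext_mult ext_one x S = x S"
  proof (cases "finite S")
    case True
    have "ext_mult ext_one x S = (\<Sum>T\<in>Pow S. if T = {} then ext_sign T (S - T) * x (S - T) else 0)"
      unfolding ext_mult_finite[OF True] by (rule sum.cong) (auto simp: ext_one_def)
    with True show ?thesis by (simp add: ext_sign_def)
  qed (use assms in \<open>simp add: ext_mult_def\<close>)
qed

lemma ext_mult_one_right:
  assumes "\<forall>S. infinite S \<longrightarrow> x S = 0"
  shows "ext_mult x ext_one = x"
proof
  fix S
  show "ext_mult x ext_one S = x S"
  proof (cases "finite S")
    case True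
    have "ext_mult x ext_one S = (\<Sum>T\<in>Pow S. if T = S then ext_sign T (S - T) * x T else 0)"
      unfolding ext_mult_finite[OF True] by (rule sum.cong) (auto simp: ext_one_def)
    with True show ?thesis by (simp add: ext_sign_def)
  qed (use assms in \<open>simp add: ext_mult_def\<close>)
qed

definition ext_parity :: "bool \<Rightarrow> 'g ext \<Rightarrow> bool" where
  "ext_parity b x \<longleftrightarrow> (\<forall>S. x S \<noteq> 0 \<longrightarrow> finite S \<and> odd (card S) = b)"

lemma ext_parity_mult:
  assumes "ext_parity b x" "ext_parity c y"
  shows "ext_parity (b \<noteq> c) (ext_mult x y)"
  unfolding ext_parity_def
proof (intro allI impI)
  fix S assume nonzero: "ext_mult x y S \<noteq> 0"
  then have fin: "finite S" by (auto simp: ext_mult_def split: if_splits)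
  with nonzero obtain T where T: "T \<subseteq> S" "x T \<noteq> 0" "y (S - T) \<noteq> 0"
    by (auto simp: ext_mult_finite elim: sum.not_neutral_contains_not_neutral)
  with assms have "odd (card T) = b" "odd (card (S - T)) = c"
    by (auto simp: ext_parity_def)
  moreover have "card S = card T + card (S - T)"
    using T(1) fin by (simp add: card_Diff_subset card_mono finite_subset)
  ultimately show "finite S \<and> odd (card S) = (b \<noteq> c)" using fin by auto
qed

lemma ext_parity_gen: "ext_parity True (ext_gen g)"
  by (simp add: ext_parity_def ext_gen_def)

lemma ext_parity_smult: "ext_parity b x \<Longrightarrow> ext_parity b (ext_smult c x)"
  by (simp add: ext_parity_def ext_smult_def)

lemma ext_parity_zero: "ext_parity b ext_zero"
  by (simp add: ext_parity_def ext_zero_def)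

lemma ext_parity_vanishes_infinite: "ext_parity b x \<Longrightarrow> infinite S \<Longrightarrow> x S = 0"
  by (auto simp: ext_parity_def)

lemma ext_mult_commute_graded:
  assumes "ext_parity b x" "ext_parity c y"
  shows "ext_mult x y = (\<lambda>S. (if b \<and> c then -1 else 1) * ext_mult y x S)"
proof
  fix S
  show "ext_mult x y S = (if b \<and> c then -1 else 1) * ext_mult y x S"
  proof (cases "finite S")
    case fin: True
    have reversed: "ext_mult y x S = (\<Sum>T\<in>Pow S. ext_sign (S - T) T * y (S - T) * x T)"
      unfolding ext_mult_finite[OF fin]
      by (rule sum.reindex_bij_witness[where i = "\<lambda>T. S - T" and j = "\<lambda>T. S - T"])
        (auto simp: double_diff)
    have termwise: "ext_sign T (S - T) * x T * y (S - T)
        = (if b \<and> c then -1 else 1) * (ext_sign (S - T) T * y (S - T) * x T)" if "T \<subseteq> S" for T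
    proof (cases "x T = 0 \<or> y (S - T) = 0")
      case False
      with assms have "odd (card T) = b" "odd (card (S - T)) = c"
        unfolding ext_parity_def by blast+
      then have "(-1::complex) ^ (card T * card (S - T)) = (if b \<and> c then -1 else 1)"
        by (auto simp: minus_one_power_iff)
      moreover have "ext_sign T (S - T) = (-1) ^ (card T * card (S - T)) * ext_sign (S - T) T"
        using that fin by (intro ext_sign_swap) (auto intro: finite_subset)
      ultimately show ?thesis by (simp add: mult_ac)
    qed auto
    show ?thesis
      unfolding reversed ext_mult_finite[OF fin, of x y] sum_distrib_left
      by (rule sum.cong) (simp_all add: termwise)
  qed (simp add: ext_mult_def)
qed

typedef (overloaded) 'g exterior = "{x :: 'g ext. \<forall>S. infinite S \<longrightarrow> x S = 0}"
  by (rule exI[of _ "\<lambda>_. 0"]) simp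

setup_lifting type_definition_exterior

instantiation exterior :: (linorder) ring_1
begin

lift_definition zero_exterior :: "'a exterior" is "\<lambda>_. 0" by simp
lift_definition one_exterior :: "'a exterior" is ext_one by (auto simp: ext_one_def)
lift_definition plus_exterior :: "'a exterior \<Rightarrow> 'a exterior \<Rightarrow> 'a exterior"
  is "\<lambda>x y S. x S + y S" by simp
lift_definition uminus_exterior :: "'a exterior \<Rightarrow> 'a exterior" is "\<lambda>x S. - x S" by simp
lift_definition minus_exterior :: "'a exterior \<Rightarrow> 'a exterior \<Rightarrow> 'a exterior"
  is "\<lambda>x y S. x S - y S" by simp
lift_definition times_exterior :: "'a exterior \<Rightarrow> 'a exterior \<Rightarrow> 'a exterior"
  is ext_mult by (simp add: ext_mult_def)

instance
proof
  fix a b c :: "'a exterior"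
  show "a * b * c = a * (b * c)" by transfer (rule ext_mult_assoc)
  show "(a + b) * c = a * c + b * c" by transfer (rule ext_mult_add_left)
  show "a * (b + c) = a * b + a * c" by transfer (rule ext_mult_add_right)
  show "1 * a = a" by transfer (rule ext_mult_one_left)
  show "a * 1 = a" by transfer (rule ext_mult_one_right)
  show "a + b + c = a + (b + c)" by transfer (simp add: add.assoc)
  show "a + b = b + a" by transfer (simp add: add.commute)
  show "0 + a = a" by transfer simp
  show "- a + a = 0" by transfer simp
  show "a - b = a + - b" by transfer simp
  show "(0::'a exterior) \<noteq> 1" by transfer (auto simp: ext_one_def fun_eq_iff)
qed

end

lemma exterior_eq_uminus_self: "(x :: 'g::linorder exterior) = - x \<Longrightarrow> x = 0"
  by transfer (auto simp: fun_eq_iff)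

lift_definition parity :: "bool \<Rightarrow> 'g exterior \<Rightarrow> bool" is ext_parity .

lemma parity_mult: "parity b x \<Longrightarrow> parity c y \<Longrightarrow> parity (b \<noteq> c) (x * y)"
  by transfer (rule ext_parity_mult)

lemma parity_add: "parity b x \<Longrightarrow> parity b y \<Longrightarrow> parity b (x + y)"
  by transfer (unfold ext_parity_def, metis add_0 add.right_neutral)

lemma parity_zero: "parity b 0"
  by transfer (simp add: ext_parity_zero[unfolded ext_zero_def])

lemma parity_sum: "(\<And>i. i \<in> A \<Longrightarrow> parity b (f i)) \<Longrightarrow> parity b (sum f A)"
  by (induction A rule: infinite_finite_induct) (simp_all add: parity_zero parity_add)

lemma mult_commute_graded:
  "parity b x \<Longrightarrow> parity c y \<Longrightarrow> x * y = (if b \<and> c then - (y * x) else y * x)"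
  by transfer (subst ext_mult_commute_graded, auto)

lemma mult_commute_even: "parity False x \<Longrightarrow> parity c y \<Longrightarrow> x * y = y * x"
  using mult_commute_graded by fastforce

lemma mult_anticommute_odd: "parity True x \<Longrightarrow> parity True y \<Longrightarrow> x * y = - (y * x)"
  using mult_commute_graded by fastforce

definition mat_prod :: "nat \<Rightarrow> (nat \<Rightarrow> nat \<Rightarrow> 'a::semiring_0) \<Rightarrow> (nat \<Rightarrow> nat \<Rightarrow> 'a)
    \<Rightarrow> nat \<Rightarrow> nat \<Rightarrow> 'a" where
  "mat_prod n X Y = (\<lambda>i j. \<Sum>l<n. X i l * Y l j)"

definition mat_tr :: "nat \<Rightarrow> (nat \<Rightarrow> nat \<Rightarrow> 'a::comm_monoid_add) \<Rightarrow> 'a" where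
  "mat_tr n X = (\<Sum>i<n. X i i)"

definition mat_transpose :: "(nat \<Rightarrow> nat \<Rightarrow> 'a) \<Rightarrow> nat \<Rightarrow> nat \<Rightarrow> 'a" where
  "mat_transpose X = (\<lambda>i j. X j i)"

fun mat_power :: "nat \<Rightarrow> (nat \<Rightarrow> nat \<Rightarrow> 'a::semiring_1) \<Rightarrow> nat \<Rightarrow> nat \<Rightarrow> nat \<Rightarrow> 'a" where
  "mat_power n X 0 = (\<lambda>i j. of_bool (i = j))"
| "mat_power n X (Suc k) = mat_prod n (mat_power n X k) X"

text \<open>\<open>mat_pow_succ n X k\<close> is \<open>X\<^sup>k\<^sup>+\<^sup>1\<close>.  It avoids the identity matrix, which is a
  two-sided unit only on the indices below \<open>n\<close>.\<close>
fun mat_pow_succ :: "nat \<Rightarrow> (nat \<Rightarrow> nat \<Rightarrow> 'a::semiring_0) \<Rightarrow> nat \<Rightarrow> nat \<Rightarrow> nat \<Rightarrow> 'a" where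
  "mat_pow_succ n X 0 = X"
| "mat_pow_succ n X (Suc k) = mat_prod n (mat_pow_succ n X k) X"

lemma mat_prod_assoc: "mat_prod n (mat_prod n X Y) Z = mat_prod n X (mat_prod n Y Z)"
  unfolding mat_prod_def
  by (auto simp: fun_eq_iff sum_distrib_left sum_distrib_right mult.assoc intro: sum.swap)

lemma mat_pow_succ_Suc_left: "mat_pow_succ n X (Suc k) = mat_prod n X (mat_pow_succ n X k)"
  by (induction k) (simp_all, metis mat_prod_assoc)

lemma mat_power_Suc_eq_pow_succ:
  "i < n \<Longrightarrow> mat_power n X (Suc k) i j = mat_pow_succ n X k i j"
  by (induction k arbitrary: j) (simp_all add: mat_prod_def)

lemma mat_tr_power_Suc: "mat_tr n (mat_power n X (Suc k)) = mat_tr n (mat_pow_succ n X k)"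
  unfolding mat_tr_def by (rule sum.cong) (simp_all add: mat_power_Suc_eq_pow_succ del: mat_power.simps)

lemma mat_tr_transpose: "mat_tr n (mat_transpose X) = mat_tr n X"
  by (simp add: mat_tr_def mat_transpose_def)

lemma mat_prod_pow_succ_intertwine:
  "mat_prod n B (mat_pow_succ n (mat_prod n A B) k) = mat_prod n (mat_pow_succ n (mat_prod n B A) k) B"
proof (induction k)
  case (Suc k)
  have "mat_prod n B (mat_pow_succ n (mat_prod n A B) (Suc k))
      = mat_prod n (mat_prod n B (mat_pow_succ n (mat_prod n A B) k)) (mat_prod n A B)"
    by (simp add: mat_prod_assoc)
  also have "\<dots> = mat_prod n (mat_prod n (mat_pow_succ n (mat_prod n B A) k) (mat_prod n B A)) B"
    by (simp only: Suc.IH mat_prod_assoc)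
  finally show ?case by simp
qed (simp add: mat_prod_assoc)

definition mat_parity :: "bool \<Rightarrow> (nat \<Rightarrow> nat \<Rightarrow> 'g::linorder exterior) \<Rightarrow> bool" where
  "mat_parity b X \<longleftrightarrow> (\<forall>i j. parity b (X i j))"

lemma mat_parity_prod: "mat_parity b X \<Longrightarrow> mat_parity c Y \<Longrightarrow> mat_parity (b \<noteq> c) (mat_prod n X Y)"
  unfolding mat_parity_def mat_prod_def by (blast intro: parity_sum parity_mult)

lemma mat_parity_pow_succ: "mat_parity False X \<Longrightarrow> mat_parity False (mat_pow_succ n X k)"
  by (induction k) (auto dest: mat_parity_prod)

lemma mat_transpose_prod_even:
  "mat_parity False X \<Longrightarrow> mat_parity c Y
    \<Longrightarrow> mat_transpose (mat_prod n X Y) = mat_prod n (mat_transpose Y) (mat_transpose X)"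
  unfolding mat_transpose_def mat_prod_def mat_parity_def fun_eq_iff
  by (auto intro!: sum.cong) (metis mult_commute_even)

lemma mat_transpose_pow_succ_even:
  assumes "mat_parity False X"
  shows "mat_transpose (mat_pow_succ n X k) = mat_pow_succ n (mat_transpose X) k"
proof (induction k)
  case (Suc k)
  have "mat_transpose (mat_pow_succ n X (Suc k))
      = mat_prod n (mat_transpose X) (mat_transpose (mat_pow_succ n X k))"
    using assms by (simp add: mat_transpose_prod_even mat_parity_pow_succ)
  then show ?case by (simp only: Suc.IH mat_pow_succ_Suc_left)
qed simp

lemma mat_tr_prod_odd_anticommute:
  assumes "mat_parity True X" "mat_parity True Y"
  shows "mat_tr n (mat_prod n X Y) = - mat_tr n (mat_prod n Y X)"
proof -
  have "mat_tr n (mat_prod n Y X) = (\<Sum>i<n. \<Sum>l<n. Y i l * X l i)"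
    by (simp add: mat_tr_def mat_prod_def)
  also have "\<dots> = (\<Sum>l<n. \<Sum>i<n. Y i l * X l i)"
    by (rule sum.swap)
  also have "\<dots> = (\<Sum>l<n. \<Sum>i<n. - (X l i * Y i l))"
    using assms unfolding mat_parity_def by (auto intro!: sum.cong) (metis mult_anticommute_odd)
  finally show ?thesis by (simp add: mat_tr_def mat_prod_def sum_negf)
qed

lemma mat_transpose_prod_antisym_sym:
  assumes "mat_parity True A" "mat_parity True B"
    and antisym: "\<And>i j. A j i = - A i j" and sym: "\<And>i j. B j i = B i j"
  shows "mat_transpose (mat_prod n A B) = mat_prod n B A"
proof (intro ext)
  fix i j
  have "A j l * B l i = B i l * A l j" for l
  proof -
    have "A j l * B l i = - (A l j * B l i)" by (simp add: antisym[of l j])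
    also have "\<dots> = B l i * A l j"
      using assms(1,2) mult_anticommute_odd[of "A l j" "B l i"] by (simp add: mat_parity_def)
    finally show ?thesis by (simp add: sym[of l i])
  qed
  then show "mat_transpose (mat_prod n A B) i j = mat_prod n B A i j"
    by (simp add: mat_transpose_def mat_prod_def)
qed

lemma mat_tr_pow_succ_antisym_sym:
  assumes odd: "mat_parity True A" "mat_parity True B"
    and antisym: "\<And>i j. A j i = - A i j" and sym: "\<And>i j. B j i = B i j"
  shows "mat_tr n (mat_pow_succ n (mat_prod n A B) k) = 0"
proof -
  let ?C = "mat_prod n A B" and ?D = "mat_prod n B A"
  have even: "mat_parity False ?C" "mat_parity False ?D"
    using mat_parity_prod[OF odd(1,2)] mat_parity_prod[OF odd(2,1)] by simp_all
  have "mat_tr n (mat_pow_succ n ?C k) = mat_tr n (mat_transpose (mat_pow_succ n ?C k))"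
    by (simp add: mat_tr_transpose)
  also have "\<dots> = mat_tr n (mat_pow_succ n ?D k)"
    by (simp add: mat_transpose_pow_succ_even[OF even(1)]
        mat_transpose_prod_antisym_sym[OF odd antisym sym])
  finally have transposed: "mat_tr n (mat_pow_succ n ?C k) = mat_tr n (mat_pow_succ n ?D k)" .
  have cycled: "mat_tr n (mat_pow_succ n ?C k) = - mat_tr n (mat_pow_succ n ?D k)"
  proof (cases k)
    case 0
    then show ?thesis using mat_tr_prod_odd_anticommute[OF odd] by simp
  next
    case (Suc k')
    have "mat_pow_succ n ?C k = mat_prod n A (mat_prod n (mat_pow_succ n ?D k') B)"
      by (simp add: Suc mat_pow_succ_Suc_left mat_prod_assoc mat_prod_pow_succ_intertwine
          del: mat_pow_succ.simps)
    moreover have "mat_parity True (mat_prod n (mat_pow_succ n ?D k') B)"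
      using mat_parity_prod[OF mat_parity_pow_succ[OF even(2)] odd(2)] by simp
    ultimately have "mat_tr n (mat_pow_succ n ?C k)
        = - mat_tr n (mat_prod n (mat_prod n (mat_pow_succ n ?D k') B) A)"
      by (simp add: mat_tr_prod_odd_anticommute[OF odd(1)])
    then show ?thesis by (simp add: Suc mat_prod_assoc)
  qed
  from transposed cycled show ?thesis
    by (simp add: exterior_eq_uminus_self)
qed

lemma foldr_ext_add_Rep:
  "foldr ext_add (map (\<lambda>l. Rep_exterior (f l)) xs) ext_zero = Rep_exterior (sum_list (map f xs))"
  by (induction xs) (simp_all add: ext_add_def ext_zero_def plus_exterior.rep_eq zero_exterior.rep_eq)

lemma mat_mult_Rep:
  "mat_mult n (\<lambda>i j. Rep_exterior (X i j)) (\<lambda>i j. Rep_exterior (Y i j))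
    = (\<lambda>i j. Rep_exterior (mat_prod n X Y i j))"
  unfolding mat_mult_def mat_prod_def
  by (simp add: foldr_ext_add_Rep interv_sum_list_conv_sum_set_nat atLeast0LessThan
      flip: times_exterior.rep_eq)

lemma mat_pow_Rep:
  "mat_pow n (\<lambda>i j. Rep_exterior (X i j)) k = (\<lambda>i j. Rep_exterior (mat_power n X k i j))"
proof (induction k)
  case 0
  show ?case
    by (auto simp: mat_id_def fun_eq_iff one_exterior.rep_eq zero_exterior.rep_eq ext_zero_def)
qed (simp add: mat_mult_Rep)

lemma mat_trace_Rep: "mat_trace n (\<lambda>i j. Rep_exterior (X i j)) = Rep_exterior (mat_tr n X)"
  unfolding mat_trace_def mat_tr_def
  using foldr_ext_add_Rep[of "\<lambda>i. X i i" "[0..<n]"]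
  by (simp add: interv_sum_list_conv_sum_set_nat atLeast0LessThan)

lemma ext_parity_a_elt: "ext_parity True (a_elt i j)"
  by (simp add: a_elt_def ext_parity_gen ext_parity_smult ext_parity_zero)

lemma ext_parity_b_elt: "ext_parity True (b_elt i j)"
  by (simp add: b_elt_def ext_parity_gen ext_parity_smult)

lift_definition a_mat :: "nat \<Rightarrow> nat \<Rightarrow> gen exterior" is a_elt
  by (rule ext_parity_vanishes_infinite[OF ext_parity_a_elt])

lift_definition b_mat :: "nat \<Rightarrow> nat \<Rightarrow> gen exterior" is b_elt
  by (rule ext_parity_vanishes_infinite[OF ext_parity_b_elt])

lemma mat_parity_a_mat: "mat_parity True a_mat"
  by (simp add: mat_parity_def parity.rep_eq a_mat.rep_eq ext_parity_a_elt)

lemma mat_parity_b_mat: "mat_parity True b_mat"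
  by (simp add: mat_parity_def parity.rep_eq b_mat.rep_eq ext_parity_b_elt)

lemma a_mat_antisym: "a_mat j i = - a_mat i j"
  by transfer (auto simp: a_elt_def ext_smult_def ext_zero_def)

lemma b_mat_sym: "b_mat j i = b_mat i j"
  by transfer (simp add: b_elt_def min.commute max.commute eq_commute)

theorem proposition5p4:
  fixes n k :: nat
  assumes "k > 0"
  shows "mat_trace n (mat_pow n (mat_mult n a_elt b_elt) k) = ext_zero"
proof -
  obtain m where k: "k = Suc m" using assms by (cases k) auto
  have a: "a_elt = (\<lambda>i j. Rep_exterior (a_mat i j))" and b: "b_elt = (\<lambda>i j. Rep_exterior (b_mat i j))"
    by (simp_all add: a_mat.rep_eq b_mat.rep_eq)
  have "mat_trace n (mat_pow n (mat_mult n a_elt b_elt) k)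
      = Rep_exterior (mat_tr n (mat_power n (mat_prod n a_mat b_mat) k))"
    unfolding a b by (simp only: mat_mult_Rep mat_pow_Rep mat_trace_Rep)
  also have "\<dots> = Rep_exterior (mat_tr n (mat_pow_succ n (mat_prod n a_mat b_mat) m))"
    by (simp only: k mat_tr_power_Suc)
  also have "\<dots> = ext_zero"
    using mat_tr_pow_succ_antisym_sym[OF mat_parity_a_mat mat_parity_b_mat a_mat_antisym b_mat_sym]
    by (simp add: zero_exterior.rep_eq ext_zero_def)
  finally show ?thesis .
qed

end
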